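(* Let $G$ be a topological group and let $G'$ be a separated topological group, with separated completions $c\colon G\to\widehat{G}$ and $c'\colon G'\to\widehat{G'}$. Let $f_n\colon G\to G'$, $n\in\mathbb{N}$, be a sequence of homomorphisms of topological groups, let $\widetilde{f}_n=c'\circ f_n\colon G\to\widehat{G'}$, and let $\widehat{f}_n\colon\widehat{G}\to\widehat{G'}$ be the unique homomorphisms of topological groups with $\widehat{f}_n\circ c=\widetilde{f}_n$. If $(f_n)_n$ converges continuously to a homomorphism $f\colon G\to G'$, then $(\widetilde{f}_n)_n$ converges continuously to the homomorphism of topological groups $\widetilde{f}=c'\circ f$ and $(\widehat{f}_n)_n$ converges continuously to the homomorphism of topological groups $\widehat{f}\colon\widehat{G}\to\widehat{G'}$ determined by $\widehat{f}\circ c=\widetilde{f}$.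
   Context: Topological groups are abelian groups with a linear topology admitting a countable fundamental system of neighbourhoods of $0$ consisting of open subgroups; homomorphisms of topological groups are continuous; separated means Hausdorff. The separated completion of $G$ is $\widehat{G}=\varprojlim_HG/H$ over open subgroups $H$ (each $G/H$ discrete), with inverse limit topology and canonical map $c$; every continuous homomorphism from $G$ to a complete group factors uniquely through $c$. A sequence of homomorphisms $f_n$ converges continuously to $f$ if every $f_n$ is continuous and for every $g\in G$ and open subgroup $H'$ of the target there exist an open subgroup $H$ of $G$ and $n_0$ such that $f_n(g+x)-f(g+x)\in H'$ for all $x\in H$, $n\ge n_0$. *)

theory Defs
  imports "HOL-Analysis.Analysis" "HOL-Algebra.Coset"
begin

definition open_subgroups :: "('a,'b) monoid_scheme \<Rightarrow> 'a topology \<Rightarrow> 'a set set" where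
  "open_subgroups G T = {H. subgroup H G \<and> openin T H}"

text \<open>Linear topology with a countable fundamental system of neighbourhoods of the
identity consisting of open subgroups: a set is open iff it contains, with each of its
points x, a translate H x of some open subgroup H; and there is a sequence of open
subgroups cofinal among all open subgroups (hence among all neighbourhoods of 1).\<close>

definition lin_top_group :: "('a,'b) monoid_scheme \<Rightarrow> 'a topology \<Rightarrow> bool" where
  "lin_top_group G T \<longleftrightarrow>
     comm_group G \<and> topspace T = carrier G \<and>
     (\<forall>U. openin T U \<longleftrightarrow>
          U \<subseteq> carrier G \<and> (\<forall>x\<in>U. \<exists>H\<in>open_subgroups G T. H #>\<^bsub>G\<^esub> x \<subseteq> U)) \<and>
     (\<exists>B :: nat \<Rightarrow> 'a set. range B \<subseteq> open_subgroups G T \<and>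
          (\<forall>H\<in>open_subgroups G T. \<exists>n. B n \<subseteq> H))"

definition top_hom ::
  "('a,'c) monoid_scheme \<Rightarrow> 'a topology \<Rightarrow> ('b,'d) monoid_scheme \<Rightarrow> 'b topology
     \<Rightarrow> ('a \<Rightarrow> 'b) \<Rightarrow> bool" where
  "top_hom G T G' T' f \<longleftrightarrow> f \<in> hom G G' \<and> continuous_map T T' f"

text \<open>Separated completion: the inverse limit of the discrete groups G/H over open
subgroups H, as a subgroup of the product, with the induced (inverse limit) topology.\<close>

definition compl_carrier :: "('a,'c) monoid_scheme \<Rightarrow> 'a topology \<Rightarrow> ('a set \<Rightarrow> 'a set) set" where
  "compl_carrier G T =
     {x \<in> (\<Pi>\<^sub>E H\<in>open_subgroups G T. rcosets\<^bsub>G\<^esub> H).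
        \<forall>H\<in>open_subgroups G T. \<forall>K\<in>open_subgroups G T. K \<subseteq> H \<longrightarrow> x K \<subseteq> x H}"

definition compl :: "('a,'c) monoid_scheme \<Rightarrow> 'a topology \<Rightarrow> ('a set \<Rightarrow> 'a set) monoid" where
  "compl G T =
     \<lparr>carrier = compl_carrier G T,
      mult = (\<lambda>x y. \<lambda>H\<in>open_subgroups G T. x H <#>\<^bsub>G\<^esub> y H),
      one = (\<lambda>H\<in>open_subgroups G T. H)\<rparr>"

definition compl_top :: "('a,'c) monoid_scheme \<Rightarrow> 'a topology \<Rightarrow> ('a set \<Rightarrow> 'a set) topology" where
  "compl_top G T =
     subtopology
       (product_topology (\<lambda>H. discrete_topology (rcosets\<^bsub>G\<^esub> H)) (open_subgroups G T))
       (compl_carrier G T)"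

definition compl_map :: "('a,'c) monoid_scheme \<Rightarrow> 'a topology \<Rightarrow> 'a \<Rightarrow> ('a set \<Rightarrow> 'a set)" where
  "compl_map G T g = (\<lambda>H\<in>open_subgroups G T. H #>\<^bsub>G\<^esub> g)"

definition conv_cont ::
  "('a,'c) monoid_scheme \<Rightarrow> 'a topology \<Rightarrow> ('b,'d) monoid_scheme \<Rightarrow> 'b topology
     \<Rightarrow> (nat \<Rightarrow> 'a \<Rightarrow> 'b) \<Rightarrow> ('a \<Rightarrow> 'b) \<Rightarrow> bool" where
  "conv_cont G T G' T' fs f \<longleftrightarrow>
     (\<forall>n. top_hom G T G' T' (fs n)) \<and>
     (\<forall>g\<in>carrier G. \<forall>H'\<in>open_subgroups G' T'. \<exists>H\<in>open_subgroups G T. \<exists>n0.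
        \<forall>x\<in>H. \<forall>n\<ge>n0. fs n (g \<otimes>\<^bsub>G\<^esub> x) \<otimes>\<^bsub>G'\<^esub> inv\<^bsub>G'\<^esub> (f (g \<otimes>\<^bsub>G\<^esub> x)) \<in> H')"

end

theory Submission
  imports Defs
begin

text \<open>A point z of the completion is a compatible family of cosets z(H), H an open subgroup,
and the completion carries the inverse limit topology of the discrete groups G/H. Hence a map
into a completion is continuous as soon as its coordinates are locally constant, and every open
subgroup of a completion contains the kernel of a projection to some \<open>G'/K\<close>; so convergence
of \<open>c' \<circ> f\<^sub>n\<close> amounts to convergence of \<open>f\<^sub>n\<close> modulo each K. The limit f is continuous
because near each point it agrees modulo K with a continuous \<open>f\<^sub>n\<close>, and its extension
to the completion has K-coordinate \<open>K f(v)\<close> at z, for any v in \<open>z(f\<^sup>-\<^sup>1(K))\<close>.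
For the extensions, continuous convergence gives for each K one open subgroup H such that
\<open>f\<^sub>n \<equiv> f\<close> modulo K uniformly on each coset of H for large n. As the image of G is dense
and the extensions are continuous, their K-coordinates at z are those of \<open>c'(f\<^sub>n(v))\<close> and
\<open>c'(f(v))\<close> for some v in the coset z(H), hence agree for large n, uniformly for z in a coset
of the kernel of the projection to G/H.\<close>

lemma conv_contD:
  assumes "conv_cont G T G2 T2 fs f"
  shows "top_hom G T G2 T2 (fs n)" "fs n \<in> hom G G2"
    and "g \<in> carrier G \<Longrightarrow> K \<in> open_subgroups G2 T2 \<Longrightarrow> \<exists>H\<in>open_subgroups G T. \<exists>n0.
           \<forall>x\<in>H. \<forall>n\<ge>n0. fs n (g \<otimes>\<^bsub>G\<^esub> x) \<otimes>\<^bsub>G2\<^esub> inv\<^bsub>G2\<^esub> f (g \<otimes>\<^bsub>G\<^esub> x) \<in> K"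
  using assms unfolding conv_cont_def top_hom_def by blast+

locale linear_top_group = comm_group G for G :: "('a,'c) monoid_scheme" (structure) +
  fixes T :: "'a topology"
  assumes lin_top_group: "lin_top_group G T"
begin

abbreviation "OS \<equiv> open_subgroups G T"
abbreviation "CC \<equiv> compl_carrier G T"
abbreviation "CG \<equiv> compl G T"
abbreviation "CT \<equiv> compl_top G T"
abbreviation "cm \<equiv> compl_map G T"

lemma topspace_eq: "topspace T = carrier G"
  using lin_top_group by (simp add: lin_top_group_def)

lemma openin_iff: "openin T U \<longleftrightarrow> U \<subseteq> carrier G \<and> (\<forall>x\<in>U. \<exists>H\<in>OS. H #> x \<subseteq> U)"
  using lin_top_group unfolding lin_top_group_def by blast

lemma open_subgroupsD:
  assumes "H \<in> OS" shows "subgroup H G" "openin T H" "H \<subseteq> carrier G"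
  using assms by (auto simp: open_subgroups_def subgroup.subset)

lemma open_subgroup_normal: "H \<in> OS \<Longrightarrow> H \<lhd> G"
  using open_subgroupsD subgroup_imp_normal by blast

lemma carrier_open_subgroup: "carrier G \<in> OS"
  using subgroup_self openin_topspace[of T] topspace_eq by (simp add: open_subgroups_def)

lemma open_subgroups_Int: "H \<in> OS \<Longrightarrow> K \<in> OS \<Longrightarrow> H \<inter> K \<in> OS"
  unfolding open_subgroups_def using subgroups_Inter_pair by auto

lemma open_subgroups_Inter: "finite F \<Longrightarrow> F \<subseteq> OS \<Longrightarrow> carrier G \<inter> \<Inter>F \<in> OS"
proof (induction F rule: finite_induct)
  case empty
  then show ?case using carrier_open_subgroup by simp
next
  case (insert H F)
  then have "H \<inter> (carrier G \<inter> \<Inter>F) \<in> OS" using open_subgroups_Int by simp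
  moreover have "carrier G \<inter> \<Inter>(insert H F) = H \<inter> (carrier G \<inter> \<Inter>F)" by auto
  ultimately show ?case by simp
qed

lemma rcos_eq_iff:
  assumes "K \<in> OS" "a \<in> carrier G" "b \<in> carrier G"
  shows "K #> a = K #> b \<longleftrightarrow> a \<otimes> inv b \<in> K"
proof -
  have K: "subgroup K G" using open_subgroupsD assms by blast
  have "a \<otimes> inv b \<in> K \<longleftrightarrow> a \<in> K #> b"
    using subgroup.rcos_module[OF K is_group assms(3,2)] by simp
  also have "\<dots> \<longleftrightarrow> K #> a = K #> b"
    using repr_independence[of a K b] rcos_self[of a K] K assms by auto
  finally show ?thesis by simp
qed

lemma openin_rcos:
  assumes K: "K \<in> OS" and x: "x \<in> carrier G" shows "openin T (K #> x)"
  unfolding openin_iff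
proof (intro conjI ballI)
  have "subgroup K G" using open_subgroupsD K by blast
  then show "K #> x \<subseteq> carrier G"
    using r_coset_subset_G[OF subgroup.subset x] by blast
  fix y assume "y \<in> K #> x"
  then have "K #> y = K #> x"
    using repr_independence[OF _ x] open_subgroupsD(1)[OF K] by metis
  then show "\<exists>H\<in>OS. H #> y \<subseteq> K #> x" using K by blast
qed

lemma set_inv_open_subgroup: "H \<in> OS \<Longrightarrow> set_inv H = H"
  using normal.rcos_inv[OF open_subgroup_normal, of H \<one>] coset_mult_one[OF open_subgroupsD(3)]
  by simp

subsection \<open>The completion as a group\<close>

lemma compl_carrier_coord: "z \<in> CC \<Longrightarrow> H \<in> OS \<Longrightarrow> z H \<in> rcosets H"
  unfolding compl_carrier_def by (auto simp: PiE_iff)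

lemma compl_carrier_extensional: "z \<in> CC \<Longrightarrow> z \<in> extensional OS"
  unfolding compl_carrier_def by (auto simp: PiE_iff)

lemma compl_carrier_mono: "z \<in> CC \<Longrightarrow> K \<in> OS \<Longrightarrow> H \<in> OS \<Longrightarrow> K \<subseteq> H \<Longrightarrow> z K \<subseteq> z H"
  unfolding compl_carrier_def by auto

lemma compl_carrier_obtain_elem:
  assumes "z \<in> CC" "H \<in> OS"
  obtains v where "v \<in> carrier G" "v \<in> z H" "z H = H #> v"
proof -
  obtain v where v: "v \<in> carrier G" "z H = H #> v"
    using compl_carrier_coord[OF assms] unfolding RCOSETS_def by auto
  then show thesis using that rcos_self open_subgroupsD(1)[OF assms(2)] by simp
qed

lemma compl_carrier_coord_eq:
  assumes "z \<in> CC" "H \<in> OS" "v \<in> z H" shows "v \<in> carrier G" "z H = H #> v"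
proof -
  obtain r where r: "r \<in> carrier G" "z H = H #> r"
    using compl_carrier_obtain_elem[OF assms(1,2)] by blast
  then show "z H = H #> v"
    using repr_independence[of v H r] open_subgroupsD(1)[OF assms(2)] assms(3) by simp
  show "v \<in> carrier G"
    using r assms(3) r_coset_subset_G[OF open_subgroupsD(3)[OF assms(2)]] by blast
qed

lemma compl_mult: "x \<otimes>\<^bsub>CG\<^esub> y = (\<lambda>H\<in>OS. x H <#> y H)"
  by (simp add: compl_def)

lemma compl_mult_apply: "H \<in> OS \<Longrightarrow> (x \<otimes>\<^bsub>CG\<^esub> y) H = x H <#> y H"
  by (simp add: compl_mult)

lemma compl_one: "\<one>\<^bsub>CG\<^esub> = (\<lambda>H\<in>OS. H)"
  by (simp add: compl_def)

lemma carrier_compl: "carrier CG = CC"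
  by (simp add: compl_def)

lemma compl_mult_closed:
  assumes "x \<in> CC" "y \<in> CC" shows "(\<lambda>H\<in>OS. x H <#> y H) \<in> CC"
  unfolding compl_carrier_def
proof (intro CollectI conjI ballI impI)
  show "(\<lambda>H\<in>OS. x H <#> y H) \<in> (\<Pi>\<^sub>E H\<in>OS. rcosets H)"
    using assms compl_carrier_coord normal.setmult_closed[OF open_subgroup_normal] by auto
  fix H K assume HK: "H \<in> OS" "K \<in> OS" "K \<subseteq> H"
  then have "x K <#> y K \<subseteq> x H <#> y H"
    using mono_set_mult compl_carrier_mono[OF assms(1) HK(2,1,3)] compl_carrier_mono[OF assms(2) HK(2,1,3)]
    by metis
  then show "(\<lambda>H\<in>OS. x H <#> y H) K \<subseteq> (\<lambda>H\<in>OS. x H <#> y H) H"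
    using HK by simp
qed

lemma compl_inv_closed:
  assumes "x \<in> CC" shows "(\<lambda>H\<in>OS. set_inv (x H)) \<in> CC"
  unfolding compl_carrier_def
proof (intro CollectI conjI ballI impI)
  show "(\<lambda>H\<in>OS. set_inv (x H)) \<in> (\<Pi>\<^sub>E H\<in>OS. rcosets H)"
    using assms compl_carrier_coord normal.setinv_closed[OF open_subgroup_normal] by auto
  fix H K assume HK: "H \<in> OS" "K \<in> OS" "K \<subseteq> H"
  then have "set_inv (x K) \<subseteq> set_inv (x H)"
    using compl_carrier_mono[OF assms HK(2,1,3)] unfolding SET_INV_def by blast
  then show "(\<lambda>H\<in>OS. set_inv (x H)) K \<subseteq> (\<lambda>H\<in>OS. set_inv (x H)) H"
    using HK by simp
qed

lemma compl_one_closed: "(\<lambda>H\<in>OS. H) \<in> CC"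
  unfolding compl_carrier_def
  using subgroup.subgroup_in_rcosets[OF open_subgroupsD(1)] is_group by auto

lemma compl_inv_mult:
  assumes "x \<in> CC" shows "(\<lambda>H\<in>OS. set_inv (x H)) \<otimes>\<^bsub>CG\<^esub> x = \<one>\<^bsub>CG\<^esub>"
proof
  fix H show "((\<lambda>H\<in>OS. set_inv (x H)) \<otimes>\<^bsub>CG\<^esub> x) H = \<one>\<^bsub>CG\<^esub> H"
    using assms compl_carrier_coord normal.rcosets_inv_mult_group_eq[OF open_subgroup_normal]
    by (cases "H \<in> OS") (auto simp: compl_mult compl_one)
qed

lemma comm_group_compl: "comm_group CG"
proof (rule comm_groupI)
  fix x y z assume xyz: "x \<in> carrier CG" "y \<in> carrier CG" "z \<in> carrier CG"
  show "x \<otimes>\<^bsub>CG\<^esub> y \<otimes>\<^bsub>CG\<^esub> z = x \<otimes>\<^bsub>CG\<^esub> (y \<otimes>\<^bsub>CG\<^esub> z)"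
  proof
    fix H show "(x \<otimes>\<^bsub>CG\<^esub> y \<otimes>\<^bsub>CG\<^esub> z) H = (x \<otimes>\<^bsub>CG\<^esub> (y \<otimes>\<^bsub>CG\<^esub> z)) H"
    proof (cases "H \<in> OS")
      case True
      have "x H \<in> rcosets H" "y H \<in> rcosets H" "z H \<in> rcosets H"
        using xyz True compl_carrier_coord by (simp_all add: carrier_compl)
      then show ?thesis
        using True normal.rcosets_assoc[OF open_subgroup_normal[OF True]] by (simp add: compl_mult_apply)
    qed (simp add: compl_mult)
  qed
next
  fix x y assume "x \<in> carrier CG" "y \<in> carrier CG"
  then have "x H <#> y H = y H <#> x H" if "H \<in> OS" for H
    using set_mult_commute[OF open_subgroupsD(3) compl_carrier_coord compl_carrier_coord] that
    by (simp add: carrier_compl)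
  then show "x \<otimes>\<^bsub>CG\<^esub> y = y \<otimes>\<^bsub>CG\<^esub> x"
    by (simp add: compl_mult cong: restrict_cong)
next
  fix x assume x: "x \<in> carrier CG"
  show "\<one>\<^bsub>CG\<^esub> \<otimes>\<^bsub>CG\<^esub> x = x"
  proof
    fix H show "(\<one>\<^bsub>CG\<^esub> \<otimes>\<^bsub>CG\<^esub> x) H = x H"
    proof (cases "H \<in> OS")
      case True
      then show ?thesis
        using x compl_carrier_coord normal.rcosets_mult_eq[OF open_subgroup_normal]
        by (simp add: compl_mult_apply compl_one carrier_compl)
    next
      case False
      then show ?thesis
        using x compl_carrier_extensional[of x] by (simp add: compl_mult carrier_compl extensional_def)
    qed
  qed
  show "\<exists>y\<in>carrier CG. y \<otimes>\<^bsub>CG\<^esub> x = \<one>\<^bsub>CG\<^esub>"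
    using x compl_inv_closed compl_inv_mult by (auto simp: carrier_compl)
qed (use compl_mult_closed compl_one_closed in \<open>simp_all add: carrier_compl compl_mult compl_one\<close>)

lemma compl_inv: "x \<in> CC \<Longrightarrow> inv\<^bsub>CG\<^esub> x = (\<lambda>H\<in>OS. set_inv (x H))"
  using group.inv_equality[OF comm_group.axioms(2)[OF comm_group_compl]] compl_inv_mult compl_inv_closed
  by (simp add: carrier_compl)

lemma compl_div_coord_eq_iff:
  assumes "w1 \<in> CC" "w2 \<in> CC" "K \<in> OS"
  shows "(w1 \<otimes>\<^bsub>CG\<^esub> inv\<^bsub>CG\<^esub> w2) K = K \<longleftrightarrow> w1 K = w2 K"
proof -
  obtain a where a: "a \<in> carrier G" "w1 K = K #> a"
    using compl_carrier_obtain_elem assms by metis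
  obtain b where b: "b \<in> carrier G" "w2 K = K #> b"
    using compl_carrier_obtain_elem assms by metis
  have K: "subgroup K G" using open_subgroupsD assms by blast
  have "(w1 \<otimes>\<^bsub>CG\<^esub> inv\<^bsub>CG\<^esub> w2) K = (K #> a) <#> (K #> inv b)"
    using assms a b normal.rcos_inv[OF open_subgroup_normal[OF assms(3)] b(1)]
    by (simp add: compl_inv compl_mult)
  also have "\<dots> = K #> (a \<otimes> inv b)"
    using normal.rcos_sum[OF open_subgroup_normal[OF assms(3)]] a b by simp
  finally have "(w1 \<otimes>\<^bsub>CG\<^esub> inv\<^bsub>CG\<^esub> w2) K = K #> (a \<otimes> inv b)" .
  moreover have "K #> (a \<otimes> inv b) = K \<longleftrightarrow> a \<otimes> inv b \<in> K"
    using coset_join1[of K "a \<otimes> inv b"] coset_join2[of "a \<otimes> inv b" K] K a b by auto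
  ultimately show ?thesis using rcos_eq_iff[OF assms(3) a(1) b(1)] a b by simp
qed

lemma compl_mult_kernel_coord:
  assumes "x \<in> CC" "y \<in> CC" "H \<in> OS" "y H = H"
  shows "(x \<otimes>\<^bsub>CG\<^esub> y) H = x H"
  using assms compl_carrier_coord normal.rcosets_mult_eq[OF open_subgroup_normal]
    set_mult_commute[OF open_subgroupsD(3)] subgroup.subgroup_in_rcosets[OF open_subgroupsD(1)] is_group
  by (simp add: compl_mult_apply)

subsection \<open>The canonical map\<close>

lemma compl_map_apply: "H \<in> OS \<Longrightarrow> cm g H = H #> g"
  by (simp add: compl_map_def)

lemma compl_map_closed:
  assumes "g \<in> carrier G" shows "cm g \<in> CC"
proof -
  have "(\<lambda>H\<in>OS. H #> g) \<in> (\<Pi>\<^sub>E H\<in>OS. rcosets H)"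
    using assms by (auto intro: rcosetsI dest: open_subgroupsD(3))
  moreover have "\<forall>H\<in>OS. \<forall>K\<in>OS. K \<subseteq> H \<longrightarrow> K #> g \<subseteq> H #> g"
    by (auto simp: r_coset_def)
  ultimately show ?thesis unfolding compl_carrier_def compl_map_def by simp
qed

lemma compl_map_coord_eq_iff:
  "K \<in> OS \<Longrightarrow> a \<in> carrier G \<Longrightarrow> b \<in> carrier G \<Longrightarrow> cm a K = cm b K \<longleftrightarrow> a \<otimes> inv b \<in> K"
  using rcos_eq_iff by (simp add: compl_map_apply)

lemma compl_map_coord_eq_of_mem:
  assumes "z \<in> CC" "L \<in> OS" "H \<in> OS" "L \<subseteq> H" "v \<in> z L"
  shows "cm v H = z H"
  using compl_carrier_coord_eq[OF assms(1,3)] compl_carrier_mono[OF assms(1-4)] assms(3,5)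
  by (auto simp: compl_map_apply)

lemma compl_map_hom: "cm \<in> hom G CG"
proof (rule homI)
  fix x y assume xy: "x \<in> carrier G" "y \<in> carrier G"
  show "cm (x \<otimes> y) = cm x \<otimes>\<^bsub>CG\<^esub> cm y"
  proof
    fix H show "cm (x \<otimes> y) H = (cm x \<otimes>\<^bsub>CG\<^esub> cm y) H"
      using normal.rcos_sum[OF open_subgroup_normal] xy
      by (cases "H \<in> OS") (simp_all add: compl_mult compl_map_def)
  qed
qed (simp add: compl_map_closed carrier_compl)

subsection \<open>The topology of the completion\<close>

lemma topspace_compl_top: "topspace CT = CC"
proof -
  have "CC \<subseteq> (\<Pi>\<^sub>E H\<in>OS. rcosets H)" unfolding compl_carrier_def by auto
  then show ?thesis unfolding compl_top_def by (auto simp: topspace_subtopology)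
qed

lemma openin_compl_coord_eq:
  assumes K: "K \<in> OS" shows "openin CT {w\<in>CC. w K = A}"
proof -
  have "continuous_map CT (discrete_topology (rcosets K)) (\<lambda>w. w K)"
    unfolding compl_top_def using K
    by (intro continuous_map_from_subtopology)
      (rule continuous_map_product_projection[where X="\<lambda>H. discrete_topology (rcosets H)", simplified])
  then have "openin CT {w \<in> topspace CT. w K \<in> {A} \<inter> rcosets K}"
    by (rule openin_continuous_map_preimage) simp
  moreover have "{w \<in> topspace CT. w K \<in> {A} \<inter> rcosets K} = {w\<in>CC. w K = A}"
    using compl_carrier_coord[OF _ K] topspace_compl_top by auto
  ultimately show ?thesis by simp
qed

text \<open>A basic open set of the product restricts finitely many coordinates; on compatible
families these are all determined by the single coordinate at their intersection.\<close>

lemma openin_compl_top_nbhd: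
  assumes "openin CT U" "z \<in> U"
  obtains H where "H \<in> OS" "\<And>w. w \<in> CC \<Longrightarrow> w H = z H \<Longrightarrow> w \<in> U"
proof -
  from assms(1) obtain S
    where S: "openin (product_topology (\<lambda>H. discrete_topology (rcosets H)) OS) S" "U = S \<inter> CC"
    unfolding compl_top_def openin_subtopology by blast
  have z: "z \<in> S" "z \<in> CC" using S assms by auto
  obtain V where V: "finite {i\<in>OS. V i \<noteq> rcosets i}" "z \<in> Pi\<^sub>E OS V" "Pi\<^sub>E OS V \<subseteq> S"
    using S(1) z(1) unfolding openin_product_topology_alt by force
  define F where "F = {i\<in>OS. V i \<noteq> rcosets i}"
  define H where "H = carrier G \<inter> \<Inter>F"
  have H: "H \<in> OS" using open_subgroups_Inter[of F] V(1) unfolding F_def H_def by auto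
  show thesis
  proof (rule that[OF H])
    fix w assume w: "w \<in> CC" "w H = z H"
    have "w i \<in> V i" if i: "i \<in> OS" for i
    proof (cases "i \<in> F")
      case True
      obtain v where "v \<in> z H" using compl_carrier_obtain_elem[OF z(2) H] by blast
      then have "w i = z i"
        using compl_map_coord_eq_of_mem[OF w(1) H i] compl_map_coord_eq_of_mem[OF z(2) H i] True w(2)
        unfolding H_def by auto
      then show ?thesis using V(2) i by (auto simp: PiE_iff)
    next
      case False
      then show ?thesis using compl_carrier_coord[OF w(1) i] i unfolding F_def by simp
    qed
    then have "w \<in> Pi\<^sub>E OS V" using compl_carrier_extensional[OF w(1)] by (auto simp: PiE_iff)
    then show "w \<in> U" using V(3) S(2) w by auto
  qed
qed

lemma open_subgroup_compl_contains_kernel: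
  assumes "U \<in> open_subgroups CG CT"
  obtains K where "K \<in> OS" "\<And>w. w \<in> CC \<Longrightarrow> w K = K \<Longrightarrow> w \<in> U"
proof -
  have U: "openin CT U" "\<one>\<^bsub>CG\<^esub> \<in> U"
    using assms subgroup.one_closed unfolding open_subgroups_def by auto
  obtain K where K: "K \<in> OS" "\<And>w. w \<in> CC \<Longrightarrow> w K = \<one>\<^bsub>CG\<^esub> K \<Longrightarrow> w \<in> U"
    using openin_compl_top_nbhd[OF U] by blast
  show thesis
    by (rule that[OF K(1)]) (use K in \<open>simp add: compl_one\<close>)
qed

lemma compl_kernel_open_subgroup:
  assumes H: "H \<in> OS" shows "{y\<in>CC. y H = H} \<in> open_subgroups CG CT"
proof -
  interpret C: comm_group CG by (rule comm_group_compl)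
  have "subgroup {y\<in>CC. y H = H} CG"
  proof (rule C.subgroupI)
    show "{y \<in> CC. y H = H} \<noteq> {}" using compl_one_closed H by auto
  next
    fix a assume "a \<in> {y \<in> CC. y H = H}"
    then show "inv\<^bsub>CG\<^esub> a \<in> {y \<in> CC. y H = H}"
      using compl_inv compl_inv_closed set_inv_open_subgroup[OF H] H by auto
  next
    fix a b assume "a \<in> {y \<in> CC. y H = H}" "b \<in> {y \<in> CC. y H = H}"
    then show "a \<otimes>\<^bsub>CG\<^esub> b \<in> {y \<in> CC. y H = H}"
      using compl_mult_closed compl_mult subgroup_mult_id[OF open_subgroupsD(1)[OF H]] H by auto
  qed (auto simp: carrier_compl)
  then show ?thesis using openin_compl_coord_eq[OF H] unfolding open_subgroups_def by simp
qed

lemma continuous_map_into_compl: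
  assumes "\<And>x. x \<in> topspace X \<Longrightarrow> \<phi> x \<in> CC"
    and "\<And>K x. K \<in> OS \<Longrightarrow> x \<in> topspace X \<Longrightarrow>
           \<exists>U. openin X U \<and> x \<in> U \<and> (\<forall>y\<in>U. \<phi> y K = \<phi> x K)"
  shows "continuous_map X CT \<phi>"
proof -
  have "continuous_map X (discrete_topology (rcosets K)) (\<lambda>x. \<phi> x K)" if K: "K \<in> OS" for K
    unfolding continuous_map_def
  proof (intro conjI allI impI)
    show "(\<lambda>x. \<phi> x K) \<in> topspace X \<rightarrow> topspace (discrete_topology (rcosets K))"
      using assms(1) compl_carrier_coord K by auto
    fix V
    show "openin X {x \<in> topspace X. \<phi> x K \<in> V}"
    proof (subst openin_subopen, intro ballI)
      fix x assume x: "x \<in> {x \<in> topspace X. \<phi> x K \<in> V}"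
      then obtain U where U: "openin X U" "x \<in> U" "\<forall>y\<in>U. \<phi> y K = \<phi> x K"
        using assms(2)[OF K] by blast
      moreover have "U \<subseteq> {x \<in> topspace X. \<phi> x K \<in> V}"
      proof
        fix y assume y: "y \<in> U"
        then have "\<phi> y K = \<phi> x K" using U(3) by blast
        then show "y \<in> {x \<in> topspace X. \<phi> x K \<in> V}" using x y openin_subset[OF U(1)] by auto
      qed
      ultimately show "\<exists>U. openin X U \<and> x \<in> U \<and> U \<subseteq> {x \<in> topspace X. \<phi> x K \<in> V}"
        by blast
    qed
  qed
  moreover have "\<phi> ` topspace X \<subseteq> extensional OS"
    using assms(1) compl_carrier_extensional by auto
  ultimately have "continuous_map X (product_topology (\<lambda>H. discrete_topology (rcosets H)) OS) \<phi>"
    unfolding continuous_map_componentwise by blast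
  then show ?thesis
    unfolding compl_top_def continuous_map_in_subtopology using assms(1) by auto
qed

lemma continuous_map_compl_map: "continuous_map T CT cm"
proof (rule continuous_map_into_compl)
  fix K x assume K: "K \<in> OS" and "x \<in> topspace T"
  then have x: "x \<in> carrier G" using topspace_eq by simp
  have "cm y K = cm x K" if "y \<in> K #> x" for y
    using that repr_independence[OF _ x open_subgroupsD(1)[OF K]] K by (simp add: compl_map_apply)
  then show "\<exists>U. openin T U \<and> x \<in> U \<and> (\<forall>y\<in>U. cm y K = cm x K)"
    using openin_rcos[OF K x] rcos_self[OF x open_subgroupsD(1)[OF K]] by blast
qed (simp add: compl_map_closed topspace_eq)

lemma conv_cont_into_complI:
  fixes X :: "('x,'e) monoid_scheme"
  assumes X: "monoid X"
    and hom: "\<And>n. top_hom X TX CG CT (gs n)"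
    and g: "\<And>x. x \<in> carrier X \<Longrightarrow> g x \<in> CC"
    and coord: "\<And>x K. x \<in> carrier X \<Longrightarrow> K \<in> OS \<Longrightarrow> \<exists>H\<in>open_subgroups X TX. \<exists>n0.
                  \<forall>y\<in>H. \<forall>n\<ge>n0. gs n (x \<otimes>\<^bsub>X\<^esub> y) K = g (x \<otimes>\<^bsub>X\<^esub> y) K"
  shows "conv_cont X TX CG CT gs g"
  unfolding conv_cont_def
proof (intro conjI allI ballI hom)
  interpret C: comm_group CG by (rule comm_group_compl)
  fix x U assume x: "x \<in> carrier X" and U: "U \<in> open_subgroups CG CT"
  obtain K where K: "K \<in> OS" "\<And>w. w \<in> CC \<Longrightarrow> w K = K \<Longrightarrow> w \<in> U"
    using open_subgroup_compl_contains_kernel[OF U] by blast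
  obtain H n0 where H: "H \<in> open_subgroups X TX"
    and Hn: "\<forall>y\<in>H. \<forall>n\<ge>n0. gs n (x \<otimes>\<^bsub>X\<^esub> y) K = g (x \<otimes>\<^bsub>X\<^esub> y) K"
    using coord[OF x K(1)] by blast
  show "\<exists>H\<in>open_subgroups X TX. \<exists>n0. \<forall>y\<in>H. \<forall>n\<ge>n0.
          gs n (x \<otimes>\<^bsub>X\<^esub> y) \<otimes>\<^bsub>CG\<^esub> inv\<^bsub>CG\<^esub> g (x \<otimes>\<^bsub>X\<^esub> y) \<in> U"
  proof (intro bexI[OF _ H] exI[of _ n0] ballI allI impI)
    fix y n assume y: "y \<in> H" and n: "n0 \<le> n"
    have "x \<otimes>\<^bsub>X\<^esub> y \<in> carrier X"
      using y H x monoid.m_closed[OF X] subgroup.subset unfolding open_subgroups_def by blast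
    then have w: "gs n (x \<otimes>\<^bsub>X\<^esub> y) \<in> CC" "g (x \<otimes>\<^bsub>X\<^esub> y) \<in> CC"
      using hom[of n] g unfolding top_hom_def by (auto simp: carrier_compl dest: hom_in_carrier)
    then have "gs n (x \<otimes>\<^bsub>X\<^esub> y) \<otimes>\<^bsub>CG\<^esub> inv\<^bsub>CG\<^esub> g (x \<otimes>\<^bsub>X\<^esub> y) \<in> CC"
      using C.m_closed C.inv_closed by (simp add: carrier_compl)
    moreover have "(gs n (x \<otimes>\<^bsub>X\<^esub> y) \<otimes>\<^bsub>CG\<^esub> inv\<^bsub>CG\<^esub> g (x \<otimes>\<^bsub>X\<^esub> y)) K = K"
      using compl_div_coord_eq_iff[OF w K(1)] Hn y n by simp
    ultimately show "gs n (x \<otimes>\<^bsub>X\<^esub> y) \<otimes>\<^bsub>CG\<^esub> inv\<^bsub>CG\<^esub> g (x \<otimes>\<^bsub>X\<^esub> y) \<in> U"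
      using K(2) by blast
  qed
qed

end

lemma linear_top_groupI: "lin_top_group G T \<Longrightarrow> linear_top_group G T"
  by (intro linear_top_group.intro linear_top_group_axioms.intro) (simp_all add: lin_top_group_def)

text \<open>Since z applied to the preimage of K is a coset of that preimage, the coordinate
at K below is the single coset \<open>K \<phi>(v)\<close>, for any v in it (compl_ext_apply).\<close>

definition compl_ext ::
  "('a,'c) monoid_scheme \<Rightarrow> ('b,'d) monoid_scheme \<Rightarrow> 'b topology \<Rightarrow> ('a \<Rightarrow> 'b)
     \<Rightarrow> ('a set \<Rightarrow> 'a set) \<Rightarrow> ('b set \<Rightarrow> 'b set)" where
  "compl_ext G G2 T2 \<phi> z =
     (\<lambda>K\<in>open_subgroups G2 T2. K <#>\<^bsub>G2\<^esub> \<phi> ` z {x \<in> carrier G. \<phi> x \<in> K})"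

locale linear_top_group_pair = A: linear_top_group G T + B: linear_top_group G2 T2
  for G :: "('a,'c) monoid_scheme" (structure) and T :: "'a topology"
    and G2 :: "('b,'d) monoid_scheme" and T2 :: "'b topology"
begin

lemma continuous_map_homI:
  assumes h: "\<phi> \<in> hom G G2" and R: "\<forall>K\<in>B.OS. \<exists>H\<in>A.OS. \<phi> ` H \<subseteq> K"
  shows "continuous_map T T2 \<phi>"
  unfolding continuous_map_def
proof (intro conjI allI impI)
  show "\<phi> \<in> topspace T \<rightarrow> topspace T2"
    using A.topspace_eq B.topspace_eq hom_in_carrier[OF h] by auto
  fix U assume U: "openin T2 U"
  show "openin T {x \<in> topspace T. \<phi> x \<in> U}"
    unfolding A.topspace_eq A.openin_iff
  proof (intro conjI ballI)
    fix x assume x: "x \<in> {x \<in> carrier G. \<phi> x \<in> U}"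
    obtain K where K: "K \<in> B.OS" "K #>\<^bsub>G2\<^esub> \<phi> x \<subseteq> U"
      using U x unfolding B.openin_iff by blast
    obtain H where H: "H \<in> A.OS" "\<phi> ` H \<subseteq> K" using R K(1) by blast
    have "\<phi> y \<in> U" if "y \<in> H #> x" for y
    proof -
      obtain h' where h': "h' \<in> H" "y = h' \<otimes> x" using \<open>y \<in> H #> x\<close> unfolding r_coset_def by blast
      then have "\<phi> y = \<phi> h' \<otimes>\<^bsub>G2\<^esub> \<phi> x"
        using x A.open_subgroupsD(3)[OF H(1)] h by (auto simp: hom_mult)
      then show "\<phi> y \<in> U" using H(2) h'(1) K(2) unfolding r_coset_def by blast
    qed
    moreover have "H #> x \<subseteq> carrier G"
      using x A.r_coset_subset_G[OF A.open_subgroupsD(3)[OF H(1)]] by blast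
    ultimately show "\<exists>H\<in>A.OS. H #> x \<subseteq> {x \<in> carrier G. \<phi> x \<in> U}" using H(1) by blast
  qed auto
qed

context
  fixes \<phi> :: "'a \<Rightarrow> 'b"
  assumes \<phi>_hom: "\<phi> \<in> hom G G2" and \<phi>_cont: "continuous_map T T2 \<phi>"
begin

lemma preimage_open_subgroup:
  assumes K: "K \<in> B.OS" shows "{x \<in> carrier G. \<phi> x \<in> K} \<in> A.OS"
proof -
  interpret \<phi>: group_hom G G2 \<phi>
    by (simp add: group_hom_def group_hom_axioms_def \<phi>_hom A.is_group B.is_group)
  have K_sub: "subgroup K G2" using B.open_subgroupsD(1)[OF K] .
  have "subgroup {x \<in> carrier G. \<phi> x \<in> K} G"
    by (rule A.subgroupI)
      (use subgroup.one_closed[OF K_sub] subgroup.m_inv_closed[OF K_sub] subgroup.m_closed[OF K_sub]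
        in auto)
  moreover have "openin T {x \<in> carrier G. \<phi> x \<in> K}"
    using openin_continuous_map_preimage[OF \<phi>_cont B.open_subgroupsD(2)[OF K]] A.topspace_eq by simp
  ultimately show ?thesis unfolding open_subgroups_def by simp
qed

lemma set_mult_image_rcos_preimage:
  assumes K: "K \<in> B.OS" and v: "v \<in> carrier G"
  shows "K <#>\<^bsub>G2\<^esub> \<phi> ` ({x \<in> carrier G. \<phi> x \<in> K} #> v) = K #>\<^bsub>G2\<^esub> \<phi> v"
proof (intro equalityI subsetI)
  have K_sub: "subgroup K G2" using B.open_subgroupsD(1)[OF K] .
  fix y assume "y \<in> K <#>\<^bsub>G2\<^esub> \<phi> ` ({x \<in> carrier G. \<phi> x \<in> K} #> v)"
  then obtain k p where kp: "k \<in> K" "p \<in> carrier G" "\<phi> p \<in> K" "y = k \<otimes>\<^bsub>G2\<^esub> \<phi> (p \<otimes> v)"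
    unfolding set_mult_def r_coset_def by auto
  then have "y = (k \<otimes>\<^bsub>G2\<^esub> \<phi> p) \<otimes>\<^bsub>G2\<^esub> \<phi> v"
    using v hom_mult[OF \<phi>_hom] hom_in_carrier[OF \<phi>_hom] subgroup.mem_carrier[OF K_sub]
    by (simp add: B.m_assoc)
  moreover have "k \<otimes>\<^bsub>G2\<^esub> \<phi> p \<in> K" using subgroup.m_closed[OF K_sub] kp by blast
  ultimately show "y \<in> K #>\<^bsub>G2\<^esub> \<phi> v" unfolding r_coset_def by blast
next
  fix y assume "y \<in> K #>\<^bsub>G2\<^esub> \<phi> v"
  moreover have "v \<in> {x \<in> carrier G. \<phi> x \<in> K} #> v"
    using A.rcos_self[OF v] A.open_subgroupsD(1)[OF preimage_open_subgroup[OF K]] .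
  ultimately show "y \<in> K <#>\<^bsub>G2\<^esub> \<phi> ` ({x \<in> carrier G. \<phi> x \<in> K} #> v)"
    unfolding set_mult_def r_coset_def by blast
qed

lemma compl_ext_apply:
  assumes z: "z \<in> A.CC" and K: "K \<in> B.OS" and v: "v \<in> z {x \<in> carrier G. \<phi> x \<in> K}"
  shows "compl_ext G G2 T2 \<phi> z K = K #>\<^bsub>G2\<^esub> \<phi> v"
  using A.compl_carrier_coord_eq[OF z preimage_open_subgroup[OF K] v]
    set_mult_image_rcos_preimage[OF K] K
  by (simp add: compl_ext_def)

lemma compl_ext_closed:
  assumes z: "z \<in> A.CC" shows "compl_ext G G2 T2 \<phi> z \<in> B.CC"
  unfolding compl_carrier_def[of G2]
proof (intro CollectI conjI ballI impI)
  show "compl_ext G G2 T2 \<phi> z \<in> (\<Pi>\<^sub>E K\<in>B.OS. rcosets\<^bsub>G2\<^esub> K)"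
  proof (rule PiE_I)
    fix K assume K: "K \<in> B.OS"
    obtain v where "v \<in> carrier G" "v \<in> z {x \<in> carrier G. \<phi> x \<in> K}"
      using A.compl_carrier_obtain_elem[OF z preimage_open_subgroup[OF K]] by blast
    then show "compl_ext G G2 T2 \<phi> z K \<in> rcosets\<^bsub>G2\<^esub> K"
      using compl_ext_apply[OF z K] B.rcosetsI[OF B.open_subgroupsD(3)[OF K]]
        hom_in_carrier[OF \<phi>_hom] by simp
  qed (simp add: compl_ext_def)
next
  fix K2 K1 assume K2: "K2 \<in> B.OS" and K1: "K1 \<in> B.OS" and sub: "K1 \<subseteq> K2"
  obtain v where v: "v \<in> z {x \<in> carrier G. \<phi> x \<in> K1}"
    using A.compl_carrier_obtain_elem[OF z preimage_open_subgroup[OF K1]] by blast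
  moreover have "z {x \<in> carrier G. \<phi> x \<in> K1} \<subseteq> z {x \<in> carrier G. \<phi> x \<in> K2}"
    using A.compl_carrier_mono[OF z preimage_open_subgroup[OF K1] preimage_open_subgroup[OF K2]] sub
    by blast
  ultimately have "compl_ext G G2 T2 \<phi> z K1 = K1 #>\<^bsub>G2\<^esub> \<phi> v"
    "compl_ext G G2 T2 \<phi> z K2 = K2 #>\<^bsub>G2\<^esub> \<phi> v"
    using compl_ext_apply[OF z K1] compl_ext_apply[OF z K2] by blast+
  then show "compl_ext G G2 T2 \<phi> z K1 \<subseteq> compl_ext G G2 T2 \<phi> z K2"
    using sub unfolding r_coset_def by auto
qed

lemma compl_ext_hom: "compl_ext G G2 T2 \<phi> \<in> hom A.CG B.CG"
proof (rule homI)
  fix z w assume "z \<in> carrier A.CG" "w \<in> carrier A.CG"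
  then have z: "z \<in> A.CC" and w: "w \<in> A.CC" by (simp_all add: A.carrier_compl)
  have zw: "z \<otimes>\<^bsub>A.CG\<^esub> w \<in> A.CC" using A.compl_mult_closed[OF z w] by (simp add: A.compl_mult)
  show "compl_ext G G2 T2 \<phi> (z \<otimes>\<^bsub>A.CG\<^esub> w) = compl_ext G G2 T2 \<phi> z \<otimes>\<^bsub>B.CG\<^esub> compl_ext G G2 T2 \<phi> w"
  proof
    fix K show "compl_ext G G2 T2 \<phi> (z \<otimes>\<^bsub>A.CG\<^esub> w) K = (compl_ext G G2 T2 \<phi> z \<otimes>\<^bsub>B.CG\<^esub> compl_ext G G2 T2 \<phi> w) K"
    proof (cases "K \<in> B.OS")
      case K: True
      let ?P = "{x \<in> carrier G. \<phi> x \<in> K}"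
      obtain a where a: "a \<in> carrier G" "a \<in> z ?P"
        using A.compl_carrier_obtain_elem[OF z preimage_open_subgroup[OF K]] by blast
      obtain b where b: "b \<in> carrier G" "b \<in> w ?P"
        using A.compl_carrier_obtain_elem[OF w preimage_open_subgroup[OF K]] by blast
      have "a \<otimes> b \<in> (z \<otimes>\<^bsub>A.CG\<^esub> w) ?P"
        using a b A.compl_mult_apply[OF preimage_open_subgroup[OF K]] unfolding set_mult_def by auto
      then have "compl_ext G G2 T2 \<phi> (z \<otimes>\<^bsub>A.CG\<^esub> w) K = K #>\<^bsub>G2\<^esub> (\<phi> a \<otimes>\<^bsub>G2\<^esub> \<phi> b)"
        using compl_ext_apply[OF zw K] hom_mult[OF \<phi>_hom a(1) b(1)] by simp
      also have "\<dots> = (K #>\<^bsub>G2\<^esub> \<phi> a) <#>\<^bsub>G2\<^esub> (K #>\<^bsub>G2\<^esub> \<phi> b)"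
        using normal.rcos_sum[OF B.open_subgroup_normal[OF K]] hom_in_carrier[OF \<phi>_hom] a b by simp
      also have "\<dots> = (compl_ext G G2 T2 \<phi> z \<otimes>\<^bsub>B.CG\<^esub> compl_ext G G2 T2 \<phi> w) K"
        using compl_ext_apply[OF z K a(2)] compl_ext_apply[OF w K b(2)] B.compl_mult_apply[OF K] by simp
      finally show ?thesis .
    qed (simp add: compl_ext_def B.compl_mult)
  qed
qed (simp add: compl_ext_closed A.carrier_compl B.carrier_compl)

lemma compl_ext_continuous: "continuous_map A.CT B.CT (compl_ext G G2 T2 \<phi>)"
proof (rule B.continuous_map_into_compl)
  show "compl_ext G G2 T2 \<phi> z \<in> B.CC" if "z \<in> topspace A.CT" for z
    using compl_ext_closed that A.topspace_compl_top by simp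
  fix K z assume K: "K \<in> B.OS" and z: "z \<in> topspace A.CT"
  let ?P = "{x \<in> carrier G. \<phi> x \<in> K}"
  have "openin A.CT {w \<in> A.CC. w ?P = z ?P}"
    by (rule A.openin_compl_coord_eq[OF preimage_open_subgroup[OF K]])
  moreover have "compl_ext G G2 T2 \<phi> w K = compl_ext G G2 T2 \<phi> z K" if "w \<in> {w \<in> A.CC. w ?P = z ?P}" for w
    using that by (simp add: compl_ext_def)
  ultimately show "\<exists>U. openin A.CT U \<and> z \<in> U \<and> (\<forall>w\<in>U. compl_ext G G2 T2 \<phi> w K = compl_ext G G2 T2 \<phi> z K)"
    using z A.topspace_compl_top by blast
qed

lemma compl_ext_compl_map:
  assumes g: "g \<in> carrier G" shows "compl_ext G G2 T2 \<phi> (A.cm g) = B.cm (\<phi> g)"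
proof
  fix K show "compl_ext G G2 T2 \<phi> (A.cm g) K = B.cm (\<phi> g) K"
  proof (cases "K \<in> B.OS")
    case K: True
    have "g \<in> A.cm g {x \<in> carrier G. \<phi> x \<in> K}"
      using A.compl_map_apply[OF preimage_open_subgroup[OF K]]
        A.rcos_self[OF g A.open_subgroupsD(1)[OF preimage_open_subgroup[OF K]]] by simp
    then show ?thesis
      using compl_ext_apply[OF A.compl_map_closed[OF g] K] B.compl_map_apply[OF K] by simp
  qed (simp add: compl_ext_def compl_map_def)
qed

lemma top_hom_compl_ext: "top_hom A.CG A.CT B.CG B.CT (compl_ext G G2 T2 \<phi>)"
  unfolding top_hom_def using compl_ext_hom compl_ext_continuous by blast

end

lemma conv_cont_continuous_limit:
  assumes f: "f \<in> hom G G2" and conv: "conv_cont G T G2 T2 fs f"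
  shows "continuous_map T T2 f"
proof (rule continuous_map_homI[OF f], intro ballI)
  fix K assume K: "K \<in> B.OS"
  have K_sub: "subgroup K G2" using B.open_subgroupsD(1)[OF K] .
  obtain H n0 where H: "H \<in> A.OS"
    and Hn: "\<forall>x\<in>H. \<forall>n\<ge>n0. fs n (\<one> \<otimes> x) \<otimes>\<^bsub>G2\<^esub> inv\<^bsub>G2\<^esub> f (\<one> \<otimes> x) \<in> K"
    using conv_contD(3)[OF conv A.one_closed K] by blast
  have hn0: "fs n0 \<in> hom G G2" "continuous_map T T2 (fs n0)"
    using conv_contD(1)[OF conv] unfolding top_hom_def by auto
  have "f x \<in> K" if x: "x \<in> H \<inter> {x \<in> carrier G. fs n0 x \<in> K}" for x
  proof -
    have xc: "x \<in> carrier G" and fn0: "fs n0 x \<in> K" using x by auto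
    have "fs n0 x \<otimes>\<^bsub>G2\<^esub> inv\<^bsub>G2\<^esub> f x \<in> K" using Hn x xc by auto
    then have "inv\<^bsub>G2\<^esub> (fs n0 x \<otimes>\<^bsub>G2\<^esub> inv\<^bsub>G2\<^esub> f x) \<otimes>\<^bsub>G2\<^esub> fs n0 x \<in> K"
      using subgroup.m_closed[OF K_sub subgroup.m_inv_closed[OF K_sub] fn0] by blast
    moreover have "inv\<^bsub>G2\<^esub> (fs n0 x \<otimes>\<^bsub>G2\<^esub> inv\<^bsub>G2\<^esub> f x) \<otimes>\<^bsub>G2\<^esub> fs n0 x = f x"
      using hom_in_carrier[OF hn0(1) xc] hom_in_carrier[OF f xc] by (simp add: B.inv_mult B.m_ac)
    ultimately show ?thesis by simp
  qed
  then show "\<exists>H\<in>A.OS. f ` H \<subseteq> K"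
    using A.open_subgroups_Int[OF H preimage_open_subgroup[OF hn0 K]] by blast
qed

lemma top_hom_comp_compl_map:
  "top_hom G T G2 T2 \<phi> \<Longrightarrow> top_hom G T B.CG B.CT (B.cm \<circ> \<phi>)"
  unfolding top_hom_def
  using hom_compose[OF _ B.compl_map_hom] continuous_map_compose[OF _ B.continuous_map_compl_map]
  by blast

lemma conv_cont_comp_compl_map:
  assumes f: "f \<in> hom G G2" and conv: "conv_cont G T G2 T2 fs f"
  shows "conv_cont G T B.CG B.CT (\<lambda>n. B.cm \<circ> fs n) (B.cm \<circ> f)"
proof (rule B.conv_cont_into_complI[OF A.is_monoid])
  show "top_hom G T B.CG B.CT (B.cm \<circ> fs n)" for n
    using top_hom_comp_compl_map[OF conv_contD(1)[OF conv]] .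
  show "(B.cm \<circ> f) x \<in> B.CC" if "x \<in> carrier G" for x
    using B.compl_map_closed hom_in_carrier[OF f that] by simp
  fix x K assume x: "x \<in> carrier G" and K: "K \<in> B.OS"
  obtain H n0 where H: "H \<in> A.OS"
    and Hn: "\<forall>y\<in>H. \<forall>n\<ge>n0. fs n (x \<otimes> y) \<otimes>\<^bsub>G2\<^esub> inv\<^bsub>G2\<^esub> f (x \<otimes> y) \<in> K"
    using conv_contD(3)[OF conv x K] by blast
  have "(B.cm \<circ> fs n) (x \<otimes> y) K = (B.cm \<circ> f) (x \<otimes> y) K" if "y \<in> H" "n0 \<le> n" for y n
  proof -
    have xy: "x \<otimes> y \<in> carrier G" using x that A.open_subgroupsD(3)[OF H] by auto
    have "fs n (x \<otimes> y) \<in> carrier G2" "f (x \<otimes> y) \<in> carrier G2"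
      using hom_in_carrier[OF conv_contD(2)[OF conv] xy] hom_in_carrier[OF f xy] by blast+
    then show ?thesis using B.compl_map_coord_eq_iff[OF K] Hn that by simp
  qed
  then show "\<exists>H\<in>A.OS. \<exists>n0. \<forall>y\<in>H. \<forall>n\<ge>n0. (B.cm \<circ> fs n) (x \<otimes> y) K = (B.cm \<circ> f) (x \<otimes> y) K"
    using H by blast
qed

text \<open>The open subgroup H is chosen before the coset: use continuous convergence at
\<open>\<one>\<close> on H and mere pointwise convergence at the representative u.\<close>

lemma conv_cont_uniform_on_rcosets:
  assumes f: "f \<in> hom G G2" and conv: "conv_cont G T G2 T2 fs f" and K: "K \<in> B.OS"
  shows "\<exists>H\<in>A.OS. \<forall>u\<in>carrier G. \<exists>n0. \<forall>v\<in>H #> u. \<forall>n\<ge>n0.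
           fs n v \<otimes>\<^bsub>G2\<^esub> inv\<^bsub>G2\<^esub> f v \<in> K"
proof -
  have K_sub: "subgroup K G2" using B.open_subgroupsD(1)[OF K] .
  note hom_fs = conv_contD(2)[OF conv]
  obtain H n1 where H: "H \<in> A.OS"
    and Hn: "\<forall>k\<in>H. \<forall>n\<ge>n1. fs n (\<one> \<otimes> k) \<otimes>\<^bsub>G2\<^esub> inv\<^bsub>G2\<^esub> f (\<one> \<otimes> k) \<in> K"
    using conv_contD(3)[OF conv A.one_closed K] by blast
  have "\<exists>n0. \<forall>v\<in>H #> u. \<forall>n\<ge>n0. fs n v \<otimes>\<^bsub>G2\<^esub> inv\<^bsub>G2\<^esub> f v \<in> K" if u: "u \<in> carrier G" for u
  proof -
    obtain H' n2 where H': "H' \<in> A.OS"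
      and H'n: "\<forall>k\<in>H'. \<forall>n\<ge>n2. fs n (u \<otimes> k) \<otimes>\<^bsub>G2\<^esub> inv\<^bsub>G2\<^esub> f (u \<otimes> k) \<in> K"
      using conv_contD(3)[OF conv u K] by blast
    have "fs n v \<otimes>\<^bsub>G2\<^esub> inv\<^bsub>G2\<^esub> f v \<in> K" if v: "v \<in> H #> u" and n: "max n1 n2 \<le> n" for v n
    proof -
      obtain k where k: "k \<in> H" "v = k \<otimes> u" using v unfolding r_coset_def by blast
      have kc: "k \<in> carrier G" using k A.open_subgroupsD(3)[OF H] by blast
      have dk: "fs n k \<otimes>\<^bsub>G2\<^esub> inv\<^bsub>G2\<^esub> f k \<in> K" using Hn k(1) kc n by auto
      have "fs n (u \<otimes> \<one>) \<otimes>\<^bsub>G2\<^esub> inv\<^bsub>G2\<^esub> f (u \<otimes> \<one>) \<in> K"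
        using H'n subgroup.one_closed[OF A.open_subgroupsD(1)[OF H']] n by auto
      then have du: "fs n u \<otimes>\<^bsub>G2\<^esub> inv\<^bsub>G2\<^esub> f u \<in> K" using u by simp
      have "fs n k \<in> carrier G2" "fs n u \<in> carrier G2" "f k \<in> carrier G2" "f u \<in> carrier G2"
        using hom_in_carrier[OF hom_fs] hom_in_carrier[OF f] kc u by auto
      then have "fs n v \<otimes>\<^bsub>G2\<^esub> inv\<^bsub>G2\<^esub> f v =
            (fs n k \<otimes>\<^bsub>G2\<^esub> inv\<^bsub>G2\<^esub> f k) \<otimes>\<^bsub>G2\<^esub> (fs n u \<otimes>\<^bsub>G2\<^esub> inv\<^bsub>G2\<^esub> f u)"
        using k(2) hom_mult[OF hom_fs kc u] hom_mult[OF f kc u] by (simp add: B.inv_mult B.m_ac)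
      then show ?thesis using subgroup.m_closed[OF K_sub dk du] by simp
    qed
    then show ?thesis by blast
  qed
  then show ?thesis using H by blast
qed

lemma continuous_map_compl_coord_local:
  assumes "continuous_map A.CT B.CT \<psi>" "z \<in> A.CC" "K \<in> B.OS"
  obtains H where "H \<in> A.OS" "\<And>w. w \<in> A.CC \<Longrightarrow> w H = z H \<Longrightarrow> \<psi> w K = \<psi> z K"
proof -
  define S where "S = {w \<in> topspace A.CT. \<psi> w \<in> {w' \<in> B.CC. w' K = \<psi> z K}}"
  have S_open: "openin A.CT S"
    unfolding S_def
    by (rule openin_continuous_map_preimage[OF assms(1) B.openin_compl_coord_eq[OF assms(3)]])
  have "\<psi> z \<in> B.CC"
    using continuous_map_image_subset_topspace[OF assms(1)] assms(2)
      A.topspace_compl_top B.topspace_compl_top by blast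
  then have z: "z \<in> S" using assms(2) A.topspace_compl_top unfolding S_def by simp
  obtain H where H: "H \<in> A.OS" "\<And>w. w \<in> A.CC \<Longrightarrow> w H = z H \<Longrightarrow> w \<in> S"
    using A.openin_compl_top_nbhd[OF S_open z] by blast
  show thesis
    by (rule that[OF H(1)]) (use H(2) in \<open>simp add: S_def\<close>)
qed

text \<open>This is where the density of the image of G in its completion enters.\<close>

lemma continuous_maps_compl_coord_eq:
  assumes cont: "continuous_map A.CT B.CT \<psi>\<^sub>1" "continuous_map A.CT B.CT \<psi>\<^sub>2"
    and z: "z \<in> A.CC" and H: "H \<in> A.OS" and K: "K \<in> B.OS"
    and eq: "\<And>v. v \<in> z H \<Longrightarrow> \<psi>\<^sub>1 (A.cm v) K = \<psi>\<^sub>2 (A.cm v) K"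
  shows "\<psi>\<^sub>1 z K = \<psi>\<^sub>2 z K"
proof -
  obtain H1 where H1: "H1 \<in> A.OS" "\<And>w. w \<in> A.CC \<Longrightarrow> w H1 = z H1 \<Longrightarrow> \<psi>\<^sub>1 w K = \<psi>\<^sub>1 z K"
    using continuous_map_compl_coord_local[OF cont(1) z K] by blast
  obtain H2 where H2: "H2 \<in> A.OS" "\<And>w. w \<in> A.CC \<Longrightarrow> w H2 = z H2 \<Longrightarrow> \<psi>\<^sub>2 w K = \<psi>\<^sub>2 z K"
    using continuous_map_compl_coord_local[OF cont(2) z K] by blast
  define L where "L = H \<inter> H1 \<inter> H2"
  have L: "L \<in> A.OS" unfolding L_def using A.open_subgroups_Int H H1(1) H2(1) by blast
  obtain v where v: "v \<in> carrier G" "v \<in> z L"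
    using A.compl_carrier_obtain_elem[OF z L] by blast
  have "v \<in> z H" using A.compl_carrier_mono[OF z L H] v(2) unfolding L_def by blast
  moreover have "A.cm v H1 = z H1" "A.cm v H2 = z H2"
    using A.compl_map_coord_eq_of_mem[OF z L] H1(1) H2(1) v(2) unfolding L_def by auto
  ultimately show ?thesis
    using H1(2) H2(2) eq A.compl_map_closed[OF v(1)] by metis
qed

lemma conv_cont_compl_extensions:
  assumes f: "f \<in> hom G G2" and conv: "conv_cont G T G2 T2 fs f"
    and fhs: "\<And>n. top_hom A.CG A.CT B.CG B.CT (fhs n)"
    and fhs_c: "\<And>n g. g \<in> carrier G \<Longrightarrow> fhs n (A.cm g) = B.cm (fs n g)"
    and fh: "top_hom A.CG A.CT B.CG B.CT fh"
    and fh_c: "\<And>g. g \<in> carrier G \<Longrightarrow> fh (A.cm g) = B.cm (f g)"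
  shows "conv_cont A.CG A.CT B.CG B.CT fhs fh"
proof -
  interpret C: comm_group A.CG by (rule A.comm_group_compl)
  show ?thesis
  proof (rule B.conv_cont_into_complI[OF C.is_monoid fhs])
    show "fh z \<in> B.CC" if "z \<in> carrier A.CG" for z
      using hom_in_carrier[OF conjunct1[OF fh[unfolded top_hom_def]] that]
      by (simp add: B.carrier_compl)
    fix x K assume x: "x \<in> carrier A.CG" and K: "K \<in> B.OS"
    obtain H where H: "H \<in> A.OS" and unif: "\<forall>u\<in>carrier G. \<exists>n0. \<forall>v\<in>H #> u. \<forall>n\<ge>n0.
        fs n v \<otimes>\<^bsub>G2\<^esub> inv\<^bsub>G2\<^esub> f v \<in> K"
      using conv_cont_uniform_on_rcosets[OF f conv K] by blast
    obtain u where u: "u \<in> carrier G" "x H = H #> u"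
      using A.compl_carrier_obtain_elem[of x H] x H by (auto simp: A.carrier_compl)
    obtain n0 where n0: "\<forall>v\<in>H #> u. \<forall>n\<ge>n0. fs n v \<otimes>\<^bsub>G2\<^esub> inv\<^bsub>G2\<^esub> f v \<in> K"
      using unif u(1) by blast
    have "fhs n (x \<otimes>\<^bsub>A.CG\<^esub> y) K = fh (x \<otimes>\<^bsub>A.CG\<^esub> y) K"
      if y: "y \<in> {y \<in> A.CC. y H = H}" and n: "n0 \<le> n" for y n
    proof (rule continuous_maps_compl_coord_eq[of "fhs n" fh "x \<otimes>\<^bsub>A.CG\<^esub> y" H])
      show "x \<otimes>\<^bsub>A.CG\<^esub> y \<in> A.CC" using x y C.m_closed by (auto simp: A.carrier_compl)
      fix v assume "v \<in> (x \<otimes>\<^bsub>A.CG\<^esub> y) H"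
      then have v: "v \<in> H #> u"
        using A.compl_mult_kernel_coord[of x y H] x y H u(2) by (simp add: A.carrier_compl)
      then have vc: "v \<in> carrier G"
        using A.r_coset_subset_G[OF A.open_subgroupsD(3)[OF H] u(1)] by blast
      then have "B.cm (fs n v) K = B.cm (f v) K"
        using B.compl_map_coord_eq_iff[OF K] hom_in_carrier[OF conv_contD(2)[OF conv]]
          hom_in_carrier[OF f] n0 v n by simp
      then show "fhs n (A.cm v) K = fh (A.cm v) K" using fhs_c fh_c vc by simp
    qed (use fhs fh H K in \<open>simp_all add: top_hom_def\<close>)
    then show "\<exists>H'\<in>open_subgroups A.CG A.CT. \<exists>n0. \<forall>y\<in>H'. \<forall>n\<ge>n0.
                 fhs n (x \<otimes>\<^bsub>A.CG\<^esub> y) K = fh (x \<otimes>\<^bsub>A.CG\<^esub> y) K"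
      using A.compl_kernel_open_subgroup[OF H] by blast
  qed
qed


end

theorem lemma1p10:
  fixes G :: "('a,'c) monoid_scheme" and T :: "'a topology"
    and G' :: "('b,'d) monoid_scheme" and T' :: "'b topology"
    and fs :: "nat \<Rightarrow> 'a \<Rightarrow> 'b" and f :: "'a \<Rightarrow> 'b"
    and fhs :: "nat \<Rightarrow> ('a set \<Rightarrow> 'a set) \<Rightarrow> ('b set \<Rightarrow> 'b set)"
  assumes G: "lin_top_group G T"
    and G': "lin_top_group G' T'" and sep: "Hausdorff_space T'"
    and f_hom: "f \<in> hom G G'"
    and fhs_hom: "\<And>n. top_hom (compl G T) (compl_top G T) (compl G' T') (compl_top G' T') (fhs n)"
    and fhs_c: "\<And>n g. g \<in> carrier G \<Longrightarrow> fhs n (compl_map G T g) = compl_map G' T' (fs n g)"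
    and conv: "conv_cont G T G' T' fs f"
  shows "top_hom G T (compl G' T') (compl_top G' T') (compl_map G' T' \<circ> f)
       \<and> conv_cont G T (compl G' T') (compl_top G' T')
            (\<lambda>n. compl_map G' T' \<circ> fs n) (compl_map G' T' \<circ> f)
       \<and> (\<exists>fh. top_hom (compl G T) (compl_top G T) (compl G' T') (compl_top G' T') fh
              \<and> (\<forall>g\<in>carrier G. fh (compl_map G T g) = compl_map G' T' (f g)))
       \<and> (\<forall>fh. top_hom (compl G T) (compl_top G T) (compl G' T') (compl_top G' T') fh
              \<and> (\<forall>g\<in>carrier G. fh (compl_map G T g) = compl_map G' T' (f g))
              \<longrightarrow> conv_cont (compl G T) (compl_top G T) (compl G' T') (compl_top G' T') fhs fh)"
proof -
  interpret linear_top_group_pair G T G' T'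
    by (intro linear_top_group_pair.intro linear_top_groupI G G')
  have f_cont: "continuous_map T T' f"
    by (rule conv_cont_continuous_limit[OF f_hom conv])
  have "top_hom G T (compl G' T') (compl_top G' T') (compl_map G' T' \<circ> f)"
    using top_hom_comp_compl_map f_hom f_cont by (simp add: top_hom_def)
  moreover note conv_cont_comp_compl_map[OF f_hom conv]
  moreover note top_hom_compl_ext[OF f_hom f_cont] compl_ext_compl_map[OF f_hom f_cont]
  moreover note conv_cont_compl_extensions[OF f_hom conv fhs_hom fhs_c]
  ultimately show ?thesis by blast
qed

end
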